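(* Let $((\mathcal{S},\mathcal{T}),(\mathcal{U},\mathcal{V}))$ be a twin cotorsion pair on a triangulated category $\mathcal{C}$, and put $\mathcal{W}=\mathcal{U}\cap\mathcal{T}$, $\mathcal{C}^+=\mathcal{W}*\mathcal{V}[1]$, $\mathcal{C}^-=\mathcal{S}[-1]*\mathcal{W}$. Then $\mathcal{U}\subseteq\mathcal{C}^-$ and $\mathcal{T}\subseteq\mathcal{C}^+$.
   Context: For full subcategories $\mathcal{X},\mathcal{Y}$, $\mathcal{X}*\mathcal{Y}$ is the full subcategory of objects $C$ admitting a distinguished triangle $X\to C\to Y\to X[1]$ with $X\in\mathcal{X}$, $Y\in\mathcal{Y}$. A cotorsion pair $(\mathcal{A},\mathcal{B})$: full subcategories closed under isomorphisms, finite direct sums and summands with $\mathcal{C}=\mathcal{A}*\mathcal{B}[1]$ and $\mathcal{C}(\mathcal{A},\mathcal{B}[1])=0$. A twin cotorsion pair $((\mathcal{S},\mathcal{T}),(\mathcal{U},\mathcal{V}))$ consists of two cotorsion pairs with $\mathcal{C}(\mathcal{S},\mathcal{V}[1])=0$. *)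

theory Defs
  imports Main
begin

text \<open>A triangulated category, presented concretely: a set of objects, hom-sets,
composition (cmp g f = g after f), identities, abelian group structure on hom-sets,
a shift functor X |-> X[1] (on objects shO, on morphisms shM) which is an additive
autoequivalence, and a class of distinguished triangles X -f-> Y -g-> Z -h-> X[1],
encoded as tuples (X, Y, Z, f, g, h).\<close>

record ('o, 'm) tricat =
  Ob    :: "'o set"
  Hom   :: "'o \<Rightarrow> 'o \<Rightarrow> 'm set"
  cmp   :: "'m \<Rightarrow> 'm \<Rightarrow> 'm"
  idm   :: "'o \<Rightarrow> 'm"
  madd  :: "'m \<Rightarrow> 'm \<Rightarrow> 'm"
  mzero :: "'o \<Rightarrow> 'o \<Rightarrow> 'm"
  mneg  :: "'m \<Rightarrow> 'm"
  shO   :: "'o \<Rightarrow> 'o"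
  shM   :: "'m \<Rightarrow> 'm"
  dtri  :: "('o \<times> 'o \<times> 'o \<times> 'm \<times> 'm \<times> 'm) set"

definition category :: "('o, 'm) tricat \<Rightarrow> bool" where
  "category C \<longleftrightarrow>
     (\<forall>X\<in>Ob C. \<forall>Y\<in>Ob C. \<forall>Z\<in>Ob C. \<forall>f\<in>Hom C X Y. \<forall>g\<in>Hom C Y Z. cmp C g f \<in> Hom C X Z) \<and>
     (\<forall>X\<in>Ob C. idm C X \<in> Hom C X X) \<and>
     (\<forall>X\<in>Ob C. \<forall>Y\<in>Ob C. \<forall>f\<in>Hom C X Y. cmp C f (idm C X) = f \<and> cmp C (idm C Y) f = f) \<and>
     (\<forall>W\<in>Ob C. \<forall>X\<in>Ob C. \<forall>Y\<in>Ob C. \<forall>Z\<in>Ob C.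
        \<forall>f\<in>Hom C W X. \<forall>g\<in>Hom C X Y. \<forall>h\<in>Hom C Y Z.
          cmp C h (cmp C g f) = cmp C (cmp C h g) f)"

definition preadditive :: "('o, 'm) tricat \<Rightarrow> bool" where
  "preadditive C \<longleftrightarrow> category C \<and>
     (\<forall>X\<in>Ob C. \<forall>Y\<in>Ob C.
        mzero C X Y \<in> Hom C X Y \<and>
        (\<forall>f\<in>Hom C X Y. \<forall>g\<in>Hom C X Y. madd C f g \<in> Hom C X Y) \<and>
        (\<forall>f\<in>Hom C X Y. mneg C f \<in> Hom C X Y) \<and>
        (\<forall>f\<in>Hom C X Y. \<forall>g\<in>Hom C X Y. \<forall>h\<in>Hom C X Y.
            madd C (madd C f g) h = madd C f (madd C g h)) \<and>
        (\<forall>f\<in>Hom C X Y. \<forall>g\<in>Hom C X Y. madd C f g = madd C g f) \<and>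
        (\<forall>f\<in>Hom C X Y. madd C (mzero C X Y) f = f) \<and>
        (\<forall>f\<in>Hom C X Y. madd C (mneg C f) f = mzero C X Y)) \<and>
     (\<forall>X\<in>Ob C. \<forall>Y\<in>Ob C. \<forall>Z\<in>Ob C.
        (\<forall>f\<in>Hom C X Y. \<forall>f'\<in>Hom C X Y. \<forall>g\<in>Hom C Y Z.
            cmp C g (madd C f f') = madd C (cmp C g f) (cmp C g f')) \<and>
        (\<forall>f\<in>Hom C X Y. \<forall>g\<in>Hom C Y Z. \<forall>g'\<in>Hom C Y Z.
            cmp C (madd C g g') f = madd C (cmp C g f) (cmp C g' f)))"

definition zero_object :: "('o, 'm) tricat \<Rightarrow> 'o \<Rightarrow> bool" where
  "zero_object C Z \<longleftrightarrow> Z \<in> Ob C \<and>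
     (\<forall>X\<in>Ob C. (\<exists>!f. f \<in> Hom C Z X) \<and> (\<exists>!f. f \<in> Hom C X Z))"

definition is_biprod :: "('o, 'm) tricat \<Rightarrow> 'o \<Rightarrow> 'o \<Rightarrow> 'o \<Rightarrow> bool" where
  "is_biprod C X Y S \<longleftrightarrow> X \<in> Ob C \<and> Y \<in> Ob C \<and> S \<in> Ob C \<and>
     (\<exists>i1\<in>Hom C X S. \<exists>i2\<in>Hom C Y S. \<exists>p1\<in>Hom C S X. \<exists>p2\<in>Hom C S Y.
        cmp C p1 i1 = idm C X \<and> cmp C p2 i2 = idm C Y \<and>
        cmp C p2 i1 = mzero C X Y \<and> cmp C p1 i2 = mzero C Y X \<and>
        madd C (cmp C i1 p1) (cmp C i2 p2) = idm C S)"

definition additive :: "('o, 'm) tricat \<Rightarrow> bool" where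
  "additive C \<longleftrightarrow> preadditive C \<and> (\<exists>Z. zero_object C Z) \<and>
     (\<forall>X\<in>Ob C. \<forall>Y\<in>Ob C. \<exists>S. is_biprod C X Y S)"

definition iso :: "('o, 'm) tricat \<Rightarrow> 'm \<Rightarrow> 'o \<Rightarrow> 'o \<Rightarrow> bool" where
  "iso C f X Y \<longleftrightarrow> f \<in> Hom C X Y \<and>
     (\<exists>g\<in>Hom C Y X. cmp C g f = idm C X \<and> cmp C f g = idm C Y)"

definition iso_obj :: "('o, 'm) tricat \<Rightarrow> 'o \<Rightarrow> 'o \<Rightarrow> bool" where
  "iso_obj C X Y \<longleftrightarrow> (\<exists>f. iso C f X Y)"

definition shift_autoequiv :: "('o, 'm) tricat \<Rightarrow> bool" where
  "shift_autoequiv C \<longleftrightarrow>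
     (\<forall>X\<in>Ob C. shO C X \<in> Ob C) \<and>
     (\<forall>X\<in>Ob C. \<forall>Y\<in>Ob C. \<forall>f\<in>Hom C X Y. shM C f \<in> Hom C (shO C X) (shO C Y)) \<and>
     (\<forall>X\<in>Ob C. shM C (idm C X) = idm C (shO C X)) \<and>
     (\<forall>X\<in>Ob C. \<forall>Y\<in>Ob C. \<forall>Z\<in>Ob C. \<forall>f\<in>Hom C X Y. \<forall>g\<in>Hom C Y Z.
        shM C (cmp C g f) = cmp C (shM C g) (shM C f)) \<and>
     (\<forall>X\<in>Ob C. \<forall>Y\<in>Ob C. \<forall>f\<in>Hom C X Y. \<forall>g\<in>Hom C X Y.
        shM C (madd C f g) = madd C (shM C f) (shM C g)) \<and>
     (\<forall>X\<in>Ob C. \<forall>Y\<in>Ob C. bij_betw (shM C) (Hom C X Y) (Hom C (shO C X) (shO C Y))) \<and>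
     (\<forall>Y\<in>Ob C. \<exists>X\<in>Ob C. iso_obj C Y (shO C X))"

definition is_triangle :: "('o, 'm) tricat \<Rightarrow> 'o \<times> 'o \<times> 'o \<times> 'm \<times> 'm \<times> 'm \<Rightarrow> bool" where
  "is_triangle C t \<longleftrightarrow> (case t of (X, Y, Z, f, g, h) \<Rightarrow>
     X \<in> Ob C \<and> Y \<in> Ob C \<and> Z \<in> Ob C \<and>
     f \<in> Hom C X Y \<and> g \<in> Hom C Y Z \<and> h \<in> Hom C Z (shO C X))"

definition triangulated :: "('o, 'm) tricat \<Rightarrow> bool" where
  "triangulated C \<longleftrightarrow> additive C \<and> shift_autoequiv C \<and>
     (\<forall>t\<in>dtri C. is_triangle C t) \<and>
     \<comment> \<open>TR1: X --id--> X --> 0 --> X[1] is distinguished\<close>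
     (\<forall>X\<in>Ob C. \<forall>Z. zero_object C Z \<longrightarrow>
        (X, X, Z, idm C X, mzero C X Z, mzero C Z (shO C X)) \<in> dtri C) \<and>
     \<comment> \<open>TR1: closure under isomorphisms of triangles\<close>
     (\<forall>X Y Z f g h X' Y' Z' f' g' h' a b c.
        (X, Y, Z, f, g, h) \<in> dtri C \<and> is_triangle C (X', Y', Z', f', g', h') \<and>
        iso C a X X' \<and> iso C b Y Y' \<and> iso C c Z Z' \<and>
        cmp C b f = cmp C f' a \<and> cmp C c g = cmp C g' b \<and>
        cmp C (shM C a) h = cmp C h' c
        \<longrightarrow> (X', Y', Z', f', g', h') \<in> dtri C) \<and>
     \<comment> \<open>TR1: every morphism embeds in a distinguished triangle\<close>
     (\<forall>X\<in>Ob C. \<forall>Y\<in>Ob C. \<forall>f\<in>Hom C X Y. \<exists>Z g h. (X, Y, Z, f, g, h) \<in> dtri C) \<and>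
     \<comment> \<open>TR2: rotation\<close>
     (\<forall>X Y Z f g h. is_triangle C (X, Y, Z, f, g, h) \<longrightarrow>
        ((X, Y, Z, f, g, h) \<in> dtri C \<longleftrightarrow>
         (Y, Z, shO C X, g, h, mneg C (shM C f)) \<in> dtri C)) \<and>
     \<comment> \<open>TR3: completion of morphisms of triangles\<close>
     (\<forall>X Y Z f g h X' Y' Z' f' g' h' a b.
        (X, Y, Z, f, g, h) \<in> dtri C \<and> (X', Y', Z', f', g', h') \<in> dtri C \<and>
        a \<in> Hom C X X' \<and> b \<in> Hom C Y Y' \<and> cmp C b f = cmp C f' a
        \<longrightarrow> (\<exists>c\<in>Hom C Z Z'. cmp C c g = cmp C g' b \<and>
                              cmp C (shM C a) h = cmp C h' c)) \<and>
     \<comment> \<open>TR4: octahedral axiom\<close>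
     (\<forall>X Y Z f g Z' j k X' l i Y' m n.
        (X, Y, Z', f, j, k) \<in> dtri C \<and> (Y, Z, X', g, l, i) \<in> dtri C \<and>
        (X, Z, Y', cmp C g f, m, n) \<in> dtri C
        \<longrightarrow> (\<exists>a\<in>Hom C Z' Y'. \<exists>b\<in>Hom C Y' X'.
              (Z', Y', X', a, b, cmp C (shM C j) i) \<in> dtri C \<and>
              cmp C a j = cmp C m g \<and> cmp C n a = k \<and>
              cmp C b m = l \<and> cmp C i b = cmp C (shM C f) n))"

definition good_subcat :: "('o, 'm) tricat \<Rightarrow> 'o set \<Rightarrow> bool" where
  "good_subcat C A \<longleftrightarrow> A \<subseteq> Ob C \<and>
     (\<forall>X\<in>A. \<forall>Y\<in>Ob C. iso_obj C X Y \<longrightarrow> Y \<in> A) \<and>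
     (\<forall>Z. zero_object C Z \<longrightarrow> Z \<in> A) \<and>
     (\<forall>X\<in>A. \<forall>Y\<in>A. \<forall>S. is_biprod C X Y S \<longrightarrow> S \<in> A) \<and>
     (\<forall>S\<in>A. \<forall>X Y. is_biprod C X Y S \<longrightarrow> X \<in> A)"

definition shift_set :: "('o, 'm) tricat \<Rightarrow> 'o set \<Rightarrow> 'o set" where
  "shift_set C A = {Y \<in> Ob C. \<exists>X\<in>A. iso_obj C Y (shO C X)}"

definition unshift_set :: "('o, 'm) tricat \<Rightarrow> 'o set \<Rightarrow> 'o set" where
  "unshift_set C A = {X \<in> Ob C. shO C X \<in> A}"

definition ext :: "('o, 'm) tricat \<Rightarrow> 'o set \<Rightarrow> 'o set \<Rightarrow> 'o set" where
  "ext C A B = {M \<in> Ob C. \<exists>X Y f g h. X \<in> A \<and> Y \<in> B \<and> (X, M, Y, f, g, h) \<in> dtri C}"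

definition hom_vanish :: "('o, 'm) tricat \<Rightarrow> 'o set \<Rightarrow> 'o set \<Rightarrow> bool" where
  "hom_vanish C A B \<longleftrightarrow> (\<forall>X\<in>A. \<forall>Y\<in>B. \<forall>f\<in>Hom C X Y. f = mzero C X Y)"

definition cotorsion_pair :: "('o, 'm) tricat \<Rightarrow> 'o set \<Rightarrow> 'o set \<Rightarrow> bool" where
  "cotorsion_pair C A B \<longleftrightarrow> good_subcat C A \<and> good_subcat C B \<and>
     Ob C = ext C A (shift_set C B) \<and> hom_vanish C A (shift_set C B)"

definition twin_cotorsion_pair ::
  "('o, 'm) tricat \<Rightarrow> 'o set \<Rightarrow> 'o set \<Rightarrow> 'o set \<Rightarrow> 'o set \<Rightarrow> bool" where
  "twin_cotorsion_pair C S T U V \<longleftrightarrow> cotorsion_pair C S T \<and> cotorsion_pair C U V \<and>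
     hom_vanish C S (shift_set C V)"

end

theory Submission
  imports Defs
begin

text \<open>Each inclusion comes from an approximation triangle of one cotorsion pair whose
outer term is then placed in another class by orthogonality.  For \<open>T0 \<in> T\<close>, the
\<open>(U, V)\<close>-triangle \<open>U0 \<rightarrow> T0 \<rightarrow> V1 \<rightarrow> U0[1]\<close> has \<open>U0 \<in> T\<close>: a map from an object of \<open>S\<close>
to \<open>U0[1]\<close> dies in \<open>T0[1]\<close> because \<open>C(S, T[1]) = 0\<close>, so it factors through \<open>V1\<close>, and
\<open>C(S, V[1]) = 0\<close>.  For \<open>U0 \<in> U\<close>, desuspending the \<open>(S, T)\<close>-triangle of \<open>U0[1]\<close> gives
\<open>X \<rightarrow> U0 \<rightarrow> T' \<rightarrow> X[1]\<close> with \<open>X[1] \<in> S\<close> and \<open>T' \<in> T\<close>, and dually \<open>T' \<in> U\<close> because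
\<open>C(U, V[1]) = C(S, V[1]) = 0\<close>.  Orthogonality detects membership since an object whose
approximation triangle has a vanishing map is a retract, hence (splitting the triangle on the
section) a direct summand, of an object of the class.\<close>

definition retract_of :: "('o, 'm) tricat \<Rightarrow> 'o \<Rightarrow> 'o \<Rightarrow> bool" where
  "retract_of C X Y \<longleftrightarrow> (\<exists>s\<in>Hom C X Y. \<exists>r\<in>Hom C Y X. cmp C r s = idm C X)"

lemma zero_object_Ob: "zero_object C Z \<Longrightarrow> Z \<in> Ob C"
  unfolding zero_object_def by blast

lemma cotorsion_pairD:
  assumes "cotorsion_pair C A B"
  shows "good_subcat C A" "good_subcat C B" "hom_vanish C A (shift_set C B)"
  using assms unfolding cotorsion_pair_def by meson+

lemma cotorsion_pair_dtri:
  assumes "cotorsion_pair C A B" "X \<in> Ob C"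
  obtains A0 B1 a b c where "A0 \<in> A" "B1 \<in> shift_set C B" "(A0, X, B1, a, b, c) \<in> dtri C"
proof -
  have "X \<in> ext C A (shift_set C B)" using assms unfolding cotorsion_pair_def by simp
  then show ?thesis using that unfolding ext_def by blast
qed

lemma cotorsion_pair_Ob:
  assumes "cotorsion_pair C A B"
  shows "A \<subseteq> Ob C" "B \<subseteq> Ob C"
  using cotorsion_pairD[OF assms] unfolding good_subcat_def by meson+

locale preadditive_cat =
  fixes C :: "('o, 'm) tricat"
  assumes preadditive: "preadditive C"
begin

lemma comp_closed [intro]:
  "\<lbrakk>X \<in> Ob C; Y \<in> Ob C; Z \<in> Ob C; f \<in> Hom C X Y; g \<in> Hom C Y Z\<rbrakk> \<Longrightarrow> cmp C g f \<in> Hom C X Z"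
  using preadditive unfolding preadditive_def category_def by meson

lemma id_closed [intro, simp]: "X \<in> Ob C \<Longrightarrow> idm C X \<in> Hom C X X"
  using preadditive unfolding preadditive_def category_def by meson

text \<open>Hom-premises come first in the simplification rules below, so that the simplifier
can instantiate the objects from them.\<close>

lemma comp_id_right [simp]: "\<lbrakk>f \<in> Hom C X Y; X \<in> Ob C; Y \<in> Ob C\<rbrakk> \<Longrightarrow> cmp C f (idm C X) = f"
  using preadditive unfolding preadditive_def category_def by meson

lemma comp_id_left [simp]: "\<lbrakk>f \<in> Hom C X Y; X \<in> Ob C; Y \<in> Ob C\<rbrakk> \<Longrightarrow> cmp C (idm C Y) f = f"
  using preadditive unfolding preadditive_def category_def by meson

lemma comp_assoc:
  "\<lbrakk>W \<in> Ob C; X \<in> Ob C; Y \<in> Ob C; Z \<in> Ob C; f \<in> Hom C W X; g \<in> Hom C X Y; h \<in> Hom C Y Z\<rbrakk>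
   \<Longrightarrow> cmp C h (cmp C g f) = cmp C (cmp C h g) f"
  using preadditive unfolding preadditive_def category_def by meson

lemma mzero_closed [intro, simp]: "\<lbrakk>X \<in> Ob C; Y \<in> Ob C\<rbrakk> \<Longrightarrow> mzero C X Y \<in> Hom C X Y"
  using preadditive unfolding preadditive_def by meson

lemma madd_closed [intro, simp]:
  "\<lbrakk>f \<in> Hom C X Y; g \<in> Hom C X Y; X \<in> Ob C; Y \<in> Ob C\<rbrakk> \<Longrightarrow> madd C f g \<in> Hom C X Y"
  using preadditive unfolding preadditive_def by meson

lemma mneg_closed [intro, simp]: "\<lbrakk>f \<in> Hom C X Y; X \<in> Ob C; Y \<in> Ob C\<rbrakk> \<Longrightarrow> mneg C f \<in> Hom C X Y"
  using preadditive unfolding preadditive_def by meson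

lemma madd_assoc:
  "\<lbrakk>X \<in> Ob C; Y \<in> Ob C; f \<in> Hom C X Y; g \<in> Hom C X Y; h \<in> Hom C X Y\<rbrakk>
   \<Longrightarrow> madd C (madd C f g) h = madd C f (madd C g h)"
  using preadditive unfolding preadditive_def by meson

lemma madd_commute: "\<lbrakk>X \<in> Ob C; Y \<in> Ob C; f \<in> Hom C X Y; g \<in> Hom C X Y\<rbrakk> \<Longrightarrow> madd C f g = madd C g f"
  using preadditive unfolding preadditive_def by meson

lemma madd_zero_left [simp]: "\<lbrakk>f \<in> Hom C X Y; X \<in> Ob C; Y \<in> Ob C\<rbrakk> \<Longrightarrow> madd C (mzero C X Y) f = f"
  using preadditive unfolding preadditive_def by meson

lemma madd_mneg_left [simp]: "\<lbrakk>f \<in> Hom C X Y; X \<in> Ob C; Y \<in> Ob C\<rbrakk> \<Longrightarrow> madd C (mneg C f) f = mzero C X Y"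
  using preadditive unfolding preadditive_def by meson

lemma comp_distrib_left:
  "\<lbrakk>X \<in> Ob C; Y \<in> Ob C; Z \<in> Ob C; f \<in> Hom C X Y; f' \<in> Hom C X Y; g \<in> Hom C Y Z\<rbrakk>
   \<Longrightarrow> cmp C g (madd C f f') = madd C (cmp C g f) (cmp C g f')"
  using preadditive unfolding preadditive_def by meson

lemma comp_distrib_right:
  "\<lbrakk>X \<in> Ob C; Y \<in> Ob C; Z \<in> Ob C; f \<in> Hom C X Y; g \<in> Hom C Y Z; g' \<in> Hom C Y Z\<rbrakk>
   \<Longrightarrow> cmp C (madd C g g') f = madd C (cmp C g f) (cmp C g' f)"
  using preadditive unfolding preadditive_def by meson

lemma madd_zero_right [simp]: "\<lbrakk>f \<in> Hom C X Y; X \<in> Ob C; Y \<in> Ob C\<rbrakk> \<Longrightarrow> madd C f (mzero C X Y) = f"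
  using madd_commute[of X Y f "mzero C X Y"] by simp

lemma madd_mneg_right [simp]: "\<lbrakk>f \<in> Hom C X Y; X \<in> Ob C; Y \<in> Ob C\<rbrakk> \<Longrightarrow> madd C f (mneg C f) = mzero C X Y"
  using madd_commute[of X Y f "mneg C f"] by simp

lemma mneg_unique:
  assumes "X \<in> Ob C" "Y \<in> Ob C" "f \<in> Hom C X Y" "g \<in> Hom C X Y" "madd C f g = mzero C X Y"
  shows "f = mneg C g"
proof -
  have "f = madd C f (madd C g (mneg C g))" using assms by simp
  also have "\<dots> = madd C (madd C f g) (mneg C g)" using assms(1-4) by (simp add: madd_assoc)
  also have "\<dots> = mneg C g" using assms by simp
  finally show ?thesis .
qed

lemma mneg_mneg [simp]: "\<lbrakk>f \<in> Hom C X Y; X \<in> Ob C; Y \<in> Ob C\<rbrakk> \<Longrightarrow> mneg C (mneg C f) = f"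
  using mneg_unique[of X Y f "mneg C f"] by simp

lemma mneg_zero [simp]: "\<lbrakk>X \<in> Ob C; Y \<in> Ob C\<rbrakk> \<Longrightarrow> mneg C (mzero C X Y) = mzero C X Y"
  using mneg_unique[of X Y "mzero C X Y" "mzero C X Y"] by simp

lemma madd_mneg_eq_zeroD:
  "\<lbrakk>X \<in> Ob C; Y \<in> Ob C; f \<in> Hom C X Y; g \<in> Hom C X Y; madd C f (mneg C g) = mzero C X Y\<rbrakk> \<Longrightarrow> f = g"
  using mneg_unique[of X Y f "mneg C g"] by simp

lemma idempotent_madd_zero:
  assumes "X \<in> Ob C" "Y \<in> Ob C" "f \<in> Hom C X Y" "madd C f f = f"
  shows "f = mzero C X Y"
proof -
  have "mzero C X Y = madd C (mneg C f) (madd C f f)" using assms by simp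
  also have "\<dots> = madd C (madd C (mneg C f) f) f" using assms by (intro madd_assoc[symmetric]) auto
  finally show ?thesis using assms by simp
qed

lemma comp_zero_right [simp]:
  assumes "g \<in> Hom C Y Z" "X \<in> Ob C" "Y \<in> Ob C" "Z \<in> Ob C"
  shows "cmp C g (mzero C X Y) = mzero C X Z"
  using assms comp_distrib_left[of X Y Z "mzero C X Y" "mzero C X Y" g]
  by (intro idempotent_madd_zero) auto

lemma comp_zero_left [simp]:
  assumes "f \<in> Hom C X Y" "X \<in> Ob C" "Y \<in> Ob C" "Z \<in> Ob C"
  shows "cmp C (mzero C Y Z) f = mzero C X Z"
  using assms comp_distrib_right[of X Y Z f "mzero C Y Z" "mzero C Y Z"]
  by (intro idempotent_madd_zero) auto

lemma comp_mneg_right: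
  assumes "X \<in> Ob C" "Y \<in> Ob C" "Z \<in> Ob C" "f \<in> Hom C X Y" "g \<in> Hom C Y Z"
  shows "cmp C g (mneg C f) = mneg C (cmp C g f)"
  using assms comp_distrib_left[of X Y Z "mneg C f" f g] by (intro mneg_unique[of X Z]) auto

lemma comp_mneg_left:
  assumes "X \<in> Ob C" "Y \<in> Ob C" "Z \<in> Ob C" "f \<in> Hom C X Y" "g \<in> Hom C Y Z"
  shows "cmp C (mneg C g) f = mneg C (cmp C g f)"
  using assms comp_distrib_right[of X Y Z f "mneg C g" g] by (intro mneg_unique[of X Z]) auto

lemma comp_diff_left:
  assumes "X \<in> Ob C" "Y \<in> Ob C" "Z \<in> Ob C" "f \<in> Hom C X Y" "f' \<in> Hom C X Y" "g \<in> Hom C Y Z"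
  shows "cmp C g (madd C f (mneg C f')) = madd C (cmp C g f) (mneg C (cmp C g f'))"
  using assms comp_distrib_left[of X Y Z f "mneg C f'" g] comp_mneg_right[of X Y Z f' g] by simp

lemma comp_diff_right:
  assumes "X \<in> Ob C" "Y \<in> Ob C" "Z \<in> Ob C" "f \<in> Hom C X Y" "g \<in> Hom C Y Z" "g' \<in> Hom C Y Z"
  shows "cmp C (madd C g (mneg C g')) f = madd C (cmp C g f) (mneg C (cmp C g' f))"
  using assms comp_distrib_right[of X Y Z f g "mneg C g'"] comp_mneg_left[of X Y Z f g'] by simp

lemma madd_diff_cancel:
  assumes "X \<in> Ob C" "Y \<in> Ob C" "f \<in> Hom C X Y" "g \<in> Hom C X Y"
  shows "madd C f (madd C g (mneg C f)) = g"
proof -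
  have "madd C f (madd C g (mneg C f)) = madd C (madd C g f) (mneg C f)"
    using assms madd_assoc[of X Y f g "mneg C f"] madd_commute[of X Y f g] by simp
  also have "\<dots> = g" using assms madd_assoc[of X Y g f "mneg C f"] by simp
  finally show ?thesis .
qed

lemma iso_refl: "X \<in> Ob C \<Longrightarrow> iso C (idm C X) X X"
  unfolding iso_def by (metis id_closed comp_id_right)

lemma iso_obj_refl: "X \<in> Ob C \<Longrightarrow> iso_obj C X X"
  unfolding iso_obj_def using iso_refl by blast

lemma retract_of_iso_right:
  assumes X: "X \<in> Ob C" and Y: "Y \<in> Ob C" and Y': "Y' \<in> Ob C"
    and "retract_of C X Y" and "iso_obj C Y Y'"
  shows "retract_of C X Y'"
proof -
  obtain s r where s: "s \<in> Hom C X Y" and r: "r \<in> Hom C Y X" and rs: "cmp C r s = idm C X"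
    using assms(4) unfolding retract_of_def by blast
  obtain \<phi> \<phi>' where \<phi>: "\<phi> \<in> Hom C Y Y'" and \<phi>': "\<phi>' \<in> Hom C Y' Y" and \<phi>'\<phi>: "cmp C \<phi>' \<phi> = idm C Y"
    using assms(5) unfolding iso_obj_def iso_def by blast
  have \<phi>s: "cmp C \<phi> s \<in> Hom C X Y'" and r\<phi>': "cmp C r \<phi>' \<in> Hom C Y' X"
    using X Y Y' s r \<phi> \<phi>' by auto
  have "cmp C (cmp C r \<phi>') (cmp C \<phi> s) = cmp C r (cmp C \<phi>' (cmp C \<phi> s))"
    using comp_assoc[of X Y' Y X "cmp C \<phi> s" \<phi>' r] X Y Y' \<phi>s r \<phi>' by simp
  also have "\<dots> = cmp C r s"
    using comp_assoc[of X Y Y' Y s \<phi> \<phi>'] \<phi>'\<phi> X Y Y' s \<phi> \<phi>' by simp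
  finally show ?thesis unfolding retract_of_def using rs \<phi>s r\<phi>' by auto
qed

end

locale triangulated_cat =
  fixes C :: "('o, 'm) tricat"
  assumes triangulated: "triangulated C"

sublocale triangulated_cat \<subseteq> preadditive_cat
  using triangulated unfolding triangulated_def additive_def by unfold_locales blast

context triangulated_cat
begin

lemma zero_object_exists: "\<exists>Z. zero_object C Z"
  using triangulated unfolding triangulated_def additive_def by blast

lemma shO_closed [intro, simp]: "X \<in> Ob C \<Longrightarrow> shO C X \<in> Ob C"
  using triangulated unfolding triangulated_def shift_autoequiv_def by meson

lemma shM_closed [intro]:
  "\<lbrakk>X \<in> Ob C; Y \<in> Ob C; f \<in> Hom C X Y\<rbrakk> \<Longrightarrow> shM C f \<in> Hom C (shO C X) (shO C Y)"
  using triangulated unfolding triangulated_def shift_autoequiv_def by meson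

lemma shM_id [simp]: "X \<in> Ob C \<Longrightarrow> shM C (idm C X) = idm C (shO C X)"
  using triangulated unfolding triangulated_def shift_autoequiv_def by meson

lemma shM_comp:
  "\<lbrakk>X \<in> Ob C; Y \<in> Ob C; Z \<in> Ob C; f \<in> Hom C X Y; g \<in> Hom C Y Z\<rbrakk>
   \<Longrightarrow> shM C (cmp C g f) = cmp C (shM C g) (shM C f)"
  using triangulated unfolding triangulated_def shift_autoequiv_def by meson

lemma shM_madd:
  "\<lbrakk>X \<in> Ob C; Y \<in> Ob C; f \<in> Hom C X Y; g \<in> Hom C X Y\<rbrakk>
   \<Longrightarrow> shM C (madd C f g) = madd C (shM C f) (shM C g)"
  using triangulated unfolding triangulated_def shift_autoequiv_def by meson

lemma shM_bij_betw:
  "\<lbrakk>X \<in> Ob C; Y \<in> Ob C\<rbrakk> \<Longrightarrow> bij_betw (shM C) (Hom C X Y) (Hom C (shO C X) (shO C Y))"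
  using triangulated unfolding triangulated_def shift_autoequiv_def by meson

lemma shO_ess_surj: "Y \<in> Ob C \<Longrightarrow> \<exists>X\<in>Ob C. iso_obj C Y (shO C X)"
  using triangulated unfolding triangulated_def shift_autoequiv_def by meson

lemma shM_inj:
  "\<lbrakk>X \<in> Ob C; Y \<in> Ob C; f \<in> Hom C X Y; g \<in> Hom C X Y; shM C f = shM C g\<rbrakk> \<Longrightarrow> f = g"
  using shM_bij_betw[of X Y] unfolding bij_betw_def inj_on_def by blast

lemma shM_surj:
  "\<lbrakk>X \<in> Ob C; Y \<in> Ob C; h \<in> Hom C (shO C X) (shO C Y)\<rbrakk> \<Longrightarrow> \<exists>f\<in>Hom C X Y. h = shM C f"
  using shM_bij_betw[of X Y] unfolding bij_betw_def by blast

lemma shM_zero [simp]: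
  assumes "X \<in> Ob C" "Y \<in> Ob C"
  shows "shM C (mzero C X Y) = mzero C (shO C X) (shO C Y)"
  using assms shM_madd[of X Y "mzero C X Y" "mzero C X Y"]
  by (intro idempotent_madd_zero) auto

lemma shM_mneg:
  assumes "X \<in> Ob C" "Y \<in> Ob C" "f \<in> Hom C X Y"
  shows "shM C (mneg C f) = mneg C (shM C f)"
  using assms shM_madd[of X Y "mneg C f" f] by (intro mneg_unique[of "shO C X" "shO C Y"]) auto

lemma shM_surj_mneg:
  assumes X: "X \<in> Ob C" and Y: "Y \<in> Ob C" and h: "h \<in> Hom C (shO C X) (shO C Y)"
  shows "\<exists>f\<in>Hom C X Y. h = mneg C (shM C f)"
proof -
  obtain f where f: "f \<in> Hom C X Y" "h = shM C f" using shM_surj[OF X Y h] by blast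
  then have "h = mneg C (shM C (mneg C f))" using shM_mneg[OF X Y f(1)] shM_closed[OF X Y f(1)] X Y by simp
  then show ?thesis using f X Y by blast
qed

lemma dtri_is_triangle: "t \<in> dtri C \<Longrightarrow> is_triangle C t"
  using triangulated unfolding triangulated_def by meson

lemma dtri_closed:
  assumes "(X, Y, Z, f, g, h) \<in> dtri C"
  shows "X \<in> Ob C" "Y \<in> Ob C" "Z \<in> Ob C"
    and "f \<in> Hom C X Y" "g \<in> Hom C Y Z" "h \<in> Hom C Z (shO C X)"
  using dtri_is_triangle[OF assms] unfolding is_triangle_def by auto

lemma dtri_trivial:
  "\<lbrakk>X \<in> Ob C; zero_object C Z\<rbrakk> \<Longrightarrow> (X, X, Z, idm C X, mzero C X Z, mzero C Z (shO C X)) \<in> dtri C"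
  using triangulated unfolding triangulated_def by meson

lemma dtri_iso_closed:
  "\<lbrakk>(X, Y, Z, f, g, h) \<in> dtri C; is_triangle C (X', Y', Z', f', g', h');
    iso C a X X'; iso C b Y Y'; iso C c Z Z';
    cmp C b f = cmp C f' a; cmp C c g = cmp C g' b; cmp C (shM C a) h = cmp C h' c\<rbrakk>
   \<Longrightarrow> (X', Y', Z', f', g', h') \<in> dtri C"
  using triangulated unfolding triangulated_def by meson

lemma dtri_exists: "\<lbrakk>X \<in> Ob C; Y \<in> Ob C; f \<in> Hom C X Y\<rbrakk> \<Longrightarrow> \<exists>Z g h. (X, Y, Z, f, g, h) \<in> dtri C"
  using triangulated unfolding triangulated_def by meson

lemma dtri_rotate_iff:
  "is_triangle C (X, Y, Z, f, g, h) \<Longrightarrow>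
   (X, Y, Z, f, g, h) \<in> dtri C \<longleftrightarrow> (Y, Z, shO C X, g, h, mneg C (shM C f)) \<in> dtri C"
  using triangulated unfolding triangulated_def by meson

lemma dtri_rotate:
  "(X, Y, Z, f, g, h) \<in> dtri C \<Longrightarrow> (Y, Z, shO C X, g, h, mneg C (shM C f)) \<in> dtri C"
  using dtri_rotate_iff dtri_is_triangle by blast

lemma dtri_morphism_exists:
  "\<lbrakk>(X, Y, Z, f, g, h) \<in> dtri C; (X', Y', Z', f', g', h') \<in> dtri C;
    a \<in> Hom C X X'; b \<in> Hom C Y Y'; cmp C b f = cmp C f' a\<rbrakk>
   \<Longrightarrow> \<exists>c\<in>Hom C Z Z'. cmp C c g = cmp C g' b \<and> cmp C (shM C a) h = cmp C h' c"
  using triangulated unfolding triangulated_def by meson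

lemma dtri_comp_zero:
  assumes tr: "(X, Y, Z, f, g, h) \<in> dtri C"
  shows "cmp C g f = mzero C X Z"
proof -
  obtain Z0 where Z0: "zero_object C Z0" using zero_object_exists by blast
  note d = dtri_closed[OF tr]
  note zero_object_Ob[OF Z0]
  moreover obtain c where "c \<in> Hom C Z0 Z" "cmp C c (mzero C X Z0) = cmp C g f"
    using dtri_morphism_exists[OF dtri_trivial[OF d(1) Z0] tr id_closed[OF d(1)] d(4)] d by auto
  ultimately show ?thesis using d by simp
qed

lemma dtri_factor_first:
  assumes tr: "(X, Y, Z, f, g, h) \<in> dtri C"
    and W: "W \<in> Ob C" and t: "t \<in> Hom C W Y" and gt: "cmp C g t = mzero C W Z"
  shows "\<exists>s\<in>Hom C W X. t = cmp C f s"
proof -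
  obtain Z0 where Z0: "zero_object C Z0" using zero_object_exists by blast
  note Z0_Ob = zero_object_Ob[OF Z0]
  note d = dtri_closed[OF tr]
  have "cmp C (mzero C Z0 Z) (mzero C W Z0) = cmp C g t" using gt W Z0_Ob d by simp
  from dtri_morphism_exists[OF dtri_rotate[OF dtri_trivial[OF W Z0]] dtri_rotate[OF tr] t _ this]
  obtain c where c: "c \<in> Hom C (shO C W) (shO C X)"
    "cmp C (shM C t) (mneg C (shM C (idm C W))) = cmp C (mneg C (shM C f)) c"
    using Z0_Ob d by auto
  obtain s where s: "s \<in> Hom C W X" "c = shM C s" using shM_surj[OF W d(1) c(1)] by blast
  have st: "shM C t \<in> Hom C (shO C W) (shO C Y)" and sf: "shM C f \<in> Hom C (shO C X) (shO C Y)"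
    using W t d by auto
  have "mneg C (shM C t) = cmp C (shM C t) (mneg C (shM C (idm C W)))"
    using W d st comp_mneg_right[of "shO C W" "shO C W" "shO C Y" "idm C (shO C W)"] by simp
  also have "\<dots> = mneg C (cmp C (shM C f) (shM C s))"
    using c(2) s W d sf comp_mneg_left[of "shO C W" "shO C X" "shO C Y"] by auto
  finally have "mneg C (shM C t) = mneg C (shM C (cmp C f s))"
    using shM_comp[of W X Y s f] W d s by simp
  then have "shM C t = shM C (cmp C f s)"
    by (metis W d(1,2,4) s(1) t comp_closed mneg_mneg shM_closed shO_closed)
  then show ?thesis using shM_inj[of W Y] W d s t by blast
qed

lemma dtri_factor_second:
  assumes tr: "(X, Y, Z, f, g, h) \<in> dtri C"
    and D: "D \<in> Ob C" and d: "d \<in> Hom C Y D" and df: "cmp C d f = mzero C X D"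
  shows "\<exists>e\<in>Hom C Z D. d = cmp C e g"
proof -
  obtain Z0 where Z0: "zero_object C Z0" using zero_object_exists by blast
  note Z0_Ob = zero_object_Ob[OF Z0]
  note dt = dtri_closed[OF tr]
  \<comment> \<open>\<open>D \<cong> D'[1]\<close> is the middle and last vertex of the doubly rotated trivial triangle on \<open>D'\<close>\<close>
  obtain D' \<phi> \<psi> where D': "D' \<in> Ob C" and \<phi>: "\<phi> \<in> Hom C D (shO C D')"
    and \<psi>: "\<psi> \<in> Hom C (shO C D') D" and \<psi>\<phi>: "cmp C \<psi> \<phi> = idm C D"
    using shO_ess_surj[OF D] unfolding iso_obj_def iso_def by blast
  have \<phi>d: "cmp C \<phi> d \<in> Hom C Y (shO C D')" using \<phi> d dt D D' by blast
  have "cmp C (cmp C \<phi> d) f = cmp C \<phi> (cmp C d f)"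
    using comp_assoc[of X Y D "shO C D'" f d \<phi>] dt D D' \<phi> d by simp
  also have "\<dots> = cmp C (mzero C Z0 (shO C D')) (mzero C X Z0)"
    using df dt D D' \<phi> Z0_Ob by (simp add: comp_zero_left[of "mzero C X Z0" X Z0])
  finally obtain c where c: "c \<in> Hom C Z (shO C D')"
    and cg: "cmp C c g = cmp C (mneg C (shM C (idm C D'))) (cmp C \<phi> d)"
    using dtri_morphism_exists[OF tr dtri_rotate[OF dtri_rotate[OF dtri_trivial[OF D' Z0]]] _ \<phi>d]
      dt Z0_Ob by auto
  have "cmp C (mneg C c) g = cmp C \<phi> d"
    using cg comp_mneg_left[of Y "shO C D'" "shO C D'" "cmp C \<phi> d" "idm C (shO C D')"]
      comp_mneg_left[of Y Z "shO C D'" g c] \<phi>d c dt D' by simp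
  then have "cmp C (cmp C \<psi> (mneg C c)) g = cmp C (cmp C \<psi> \<phi>) d"
    using comp_assoc[of Y Z "shO C D'" D g "mneg C c" \<psi>] comp_assoc[of Y D "shO C D'" D d \<phi> \<psi>]
      dt D D' \<phi> \<psi> c d by simp
  moreover have "cmp C \<psi> (mneg C c) \<in> Hom C Z D" using \<psi> c dt D D' by blast
  ultimately show ?thesis using \<psi>\<phi> d dt D by auto
qed

lemma dtri_third_zero_epi:
  assumes tr: "(X, Y, Z, f, g, h) \<in> dtri C" and h: "h = mzero C Z (shO C X)"
    and D: "D \<in> Ob C" and t: "t \<in> Hom C Z D" and tg: "cmp C t g = mzero C Y D"
  shows "t = mzero C Z D"
proof -
  obtain e where "e \<in> Hom C (shO C X) D" "t = cmp C e h"
    using dtri_factor_second[OF dtri_rotate[OF tr] D t tg] by blast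
  then show ?thesis using h dtri_closed[OF tr] D by simp
qed

lemma dtri_split_mono_third_zero:
  assumes tr: "(X, Y, Z, s, p, w) \<in> dtri C" and r: "r \<in> Hom C Y X" and rs: "cmp C r s = idm C X"
  shows "w = mzero C Z (shO C X)"
proof -
  note d = dtri_closed[OF tr]
  have ss: "shM C s \<in> Hom C (shO C X) (shO C Y)" and sr: "shM C r \<in> Hom C (shO C Y) (shO C X)"
    using d r by auto
  have "cmp C (mneg C (shM C s)) w = mzero C Z (shO C Y)"
    using dtri_comp_zero[OF dtri_rotate[OF dtri_rotate[OF tr]]] .
  then have sw: "cmp C (shM C s) w = mzero C Z (shO C Y)"
    using comp_mneg_left[of Z "shO C X" "shO C Y" w "shM C s"] d ss
      mneg_mneg[of "cmp C (shM C s) w" Z "shO C Y"] comp_closed[of Z "shO C X" "shO C Y" w "shM C s"]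
    by auto
  have "w = cmp C (shM C (cmp C r s)) w" using rs d by simp
  also have "\<dots> = cmp C (shM C r) (cmp C (shM C s) w)"
    using shM_comp[of X Y X s r] comp_assoc[of Z "shO C X" "shO C Y" "shO C X" w "shM C s" "shM C r"]
      d r ss sr by simp
  finally show ?thesis using sw d sr by simp
qed

lemma dtri_split_mono_complement:
  assumes tr: "(X, Y, Z, s, p, w) \<in> dtri C" and r: "r \<in> Hom C Y X" and rs: "cmp C r s = idm C X"
  obtains i where "i \<in> Hom C Z Y" "cmp C i p = madd C (idm C Y) (mneg C (cmp C s r))"
proof -
  note d = dtri_closed[OF tr]
  have sr: "cmp C s r \<in> Hom C Y Y" using d r by blast
  have "cmp C (cmp C s r) s = s" using comp_assoc[of X Y X Y s r s] rs d r by simp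
  then have "cmp C (madd C (idm C Y) (mneg C (cmp C s r))) s = mzero C X Y"
    using comp_diff_right[of X Y Y s "idm C Y" "cmp C s r"] d sr by simp
  moreover have "madd C (idm C Y) (mneg C (cmp C s r)) \<in> Hom C Y Y" using d sr by simp
  ultimately show ?thesis using that dtri_factor_second[OF tr d(2)] by metis
qed

lemma retract_of_biprod:
  assumes X: "X \<in> Ob C" and Y: "Y \<in> Ob C" and "retract_of C X Y"
  shows "\<exists>Z. is_biprod C X Z Y"
proof -
  obtain s r where s: "s \<in> Hom C X Y" and r: "r \<in> Hom C Y X" and rs: "cmp C r s = idm C X"
    using assms(3) unfolding retract_of_def by blast
  obtain Z p w where tr: "(X, Y, Z, s, p, w) \<in> dtri C" using dtri_exists[OF X Y s] by blast
  note d = dtri_closed[OF tr]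
  have w: "w = mzero C Z (shO C X)" using dtri_split_mono_third_zero[OF tr r rs] .
  have sr: "cmp C s r \<in> Hom C Y Y" using s r X Y by blast
  obtain i where i: "i \<in> Hom C Z Y" and ip: "cmp C i p = madd C (idm C Y) (mneg C (cmp C s r))"
    using dtri_split_mono_complement[OF tr r rs] .
  have ps: "cmp C p s = mzero C X Z" using dtri_comp_zero[OF tr] .
  have "cmp C (cmp C r i) p = cmp C r (cmp C i p)" using comp_assoc[of Y Z Y X p i r] i d r by simp
  also have "\<dots> = mzero C Y X"
    using ip comp_diff_left[of Y Y X "idm C Y" "cmp C s r" r] comp_assoc[of Y X Y X r s r] rs X Y r s sr
    by simp
  finally have ri: "cmp C r i = mzero C Z X"
    using dtri_third_zero_epi[OF tr w X, of "cmp C r i"] i r d X Y by auto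
  have "cmp C (cmp C p i) p = cmp C p (cmp C i p)" using comp_assoc[of Y Z Y Z p i p] i d by simp
  also have "\<dots> = p"
    using ip comp_diff_left[of Y Y Z "idm C Y" "cmp C s r" p] comp_assoc[of Y X Y Z r s p] ps X Y s r sr d
    by simp
  finally have "cmp C (madd C (cmp C p i) (mneg C (idm C Z))) p = mzero C Y Z"
    using comp_diff_right[of Y Z Z p "cmp C p i" "idm C Z"] i d by auto
  then have "madd C (cmp C p i) (mneg C (idm C Z)) = mzero C Z Z"
    using dtri_third_zero_epi[OF tr w, of Z "madd C (cmp C p i) (mneg C (idm C Z))"] i d by auto
  then have pi: "cmp C p i = idm C Z"
    using madd_mneg_eq_zeroD[of Z Z "cmp C p i" "idm C Z"] i d by auto
  have "madd C (cmp C s r) (cmp C i p) = idm C Y"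
    using madd_diff_cancel[of Y Y "cmp C s r" "idm C Y"] ip sr Y by simp
  then have "is_biprod C X Z Y"
    unfolding is_biprod_def using X Y d(3) s r i d(5) rs pi ps ri
    by (intro conjI bexI[of _ s] bexI[of _ i] bexI[of _ r] bexI[of _ p])
  then show ?thesis ..
qed

lemma retract_of_unshift:
  assumes X: "X \<in> Ob C" and Y: "Y \<in> Ob C" and "retract_of C (shO C X) (shO C Y)"
  shows "retract_of C X Y"
proof -
  obtain s r where s: "s \<in> Hom C (shO C X) (shO C Y)" and r: "r \<in> Hom C (shO C Y) (shO C X)"
    and rs: "cmp C r s = idm C (shO C X)"
    using assms(3) unfolding retract_of_def by blast
  obtain s0 r0 where s0: "s0 \<in> Hom C X Y" "s = shM C s0" and r0: "r0 \<in> Hom C Y X" "r = shM C r0"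
    using shM_surj[OF X Y s] shM_surj[OF Y X r] by blast
  have "shM C (cmp C r0 s0) = shM C (idm C X)" using shM_comp[OF X Y X s0(1) r0(1)] s0 r0 rs X by simp
  then have "cmp C r0 s0 = idm C X" using shM_inj[of X X] X Y s0 r0 by blast
  then show ?thesis unfolding retract_of_def using s0 r0 by blast
qed

lemma good_subcat_retract_closed:
  assumes "good_subcat C A" "Y \<in> A" "X \<in> Ob C" "retract_of C X Y"
  shows "X \<in> A"
proof -
  have "Y \<in> Ob C" using assms(1,2) unfolding good_subcat_def by blast
  then obtain Z where "is_biprod C X Z Y" using retract_of_biprod assms(3,4) by blast
  then show ?thesis using assms(1,2) unfolding good_subcat_def by blast
qed

lemma shO_in_shift_set: "\<lbrakk>B \<subseteq> Ob C; X \<in> B\<rbrakk> \<Longrightarrow> shO C X \<in> shift_set C B"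
  unfolding shift_set_def using iso_obj_refl by blast

lemma dtri_transport:
  assumes tr: "(X, Y, Z, f, g, h) \<in> dtri C" and X': "X' \<in> Ob C" and Z': "Z' \<in> Ob C"
    and "iso_obj C X X'" and "iso_obj C Z Z'"
  shows "\<exists>f' g' h'. (X', Y, Z', f', g', h') \<in> dtri C"
proof -
  note d = dtri_closed[OF tr]
  obtain \<phi> \<phi>' where \<phi>: "iso C \<phi> X X'" and \<phi>': "\<phi>' \<in> Hom C X' X" and \<phi>'\<phi>: "cmp C \<phi>' \<phi> = idm C X"
    using assms(4) unfolding iso_obj_def iso_def by blast
  obtain \<psi> \<psi>' where \<psi>: "iso C \<psi> Z Z'" and \<psi>': "\<psi>' \<in> Hom C Z' Z" and \<psi>'\<psi>: "cmp C \<psi>' \<psi> = idm C Z"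
    using assms(5) unfolding iso_obj_def iso_def by blast
  have \<phi>_Hom: "\<phi> \<in> Hom C X X'" and \<psi>_Hom: "\<psi> \<in> Hom C Z Z'" using \<phi> \<psi> unfolding iso_def by blast+
  define h\<^sub>\<phi> where "h\<^sub>\<phi> = cmp C (shM C \<phi>) h"
  have h\<^sub>\<phi>: "h\<^sub>\<phi> \<in> Hom C Z (shO C X')" unfolding h\<^sub>\<phi>_def using d X' \<phi>_Hom by blast
  have "is_triangle C (X', Y, Z', cmp C f \<phi>', cmp C \<psi> g, cmp C h\<^sub>\<phi> \<psi>')"
    unfolding is_triangle_def using d X' Z' \<phi>' \<psi>_Hom \<psi>' h\<^sub>\<phi> by auto
  moreover have "cmp C (idm C Y) f = cmp C (cmp C f \<phi>') \<phi>"
    using comp_assoc[of X X' X Y \<phi> \<phi>' f] \<phi>'\<phi> d X' \<phi>_Hom \<phi>' by simp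
  moreover have "cmp C \<psi> g = cmp C (cmp C \<psi> g) (idm C Y)"
    using comp_closed[of Y Z Z' g \<psi>] d Z' \<psi>_Hom by simp
  moreover have "cmp C (shM C \<phi>) h = cmp C (cmp C h\<^sub>\<phi> \<psi>') \<psi>"
    using comp_assoc[of Z Z' Z "shO C X'" \<psi> \<psi>' h\<^sub>\<phi>] \<psi>'\<psi> h\<^sub>\<phi> d X' Z' \<psi>_Hom \<psi>'
    unfolding h\<^sub>\<phi>_def by simp
  ultimately show ?thesis
    using dtri_iso_closed[OF tr _ \<phi> iso_refl[OF d(2)] \<psi>] by blast
qed

lemma dtri_unshift:
  assumes X: "X \<in> Ob C" and Y: "Y \<in> Ob C" and Z: "Z \<in> Ob C"
    and tr: "(shO C X, shO C Y, shO C Z, f', g', h') \<in> dtri C"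
  shows "\<exists>f g h. (X, Y, Z, f, g, h) \<in> dtri C"
proof -
  note d = dtri_closed[OF tr]
  \<comment> \<open>three rotations turn \<open>(X, Y, Z, f, g, h)\<close> into \<open>(X[1], Y[1], Z[1], -f[1], -g[1], -h[1])\<close>\<close>
  obtain f g h where f: "f \<in> Hom C X Y" "f' = mneg C (shM C f)"
    and g: "g \<in> Hom C Y Z" "g' = mneg C (shM C g)"
    and h: "h \<in> Hom C Z (shO C X)" "h' = mneg C (shM C h)"
    using shM_surj_mneg[OF X Y d(4)] shM_surj_mneg[OF Y Z d(5)] shM_surj_mneg[OF Z shO_closed[OF X] d(6)]
    by blast
  have "is_triangle C (X, Y, Z, f, g, h)"
    unfolding is_triangle_def using X Y Z f g h by simp
  moreover have "is_triangle C (Y, Z, shO C X, g, h, mneg C (shM C f))"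
    unfolding is_triangle_def using X Y Z f g h by (simp add: shM_closed)
  moreover have "is_triangle C (Z, shO C X, shO C Y, h, mneg C (shM C f), mneg C (shM C g))"
    unfolding is_triangle_def using X Y Z f g h by (simp add: shM_closed)
  ultimately have "(X, Y, Z, f, g, h) \<in> dtri C"
    using dtri_rotate_iff tr f g h by metis
  then show ?thesis by blast
qed

lemma cotorsion_pair_left_memI:
  assumes cp: "cotorsion_pair C A B" and X: "X \<in> Ob C" and vanish: "hom_vanish C {X} (shift_set C B)"
  shows "X \<in> A"
proof -
  obtain A0 B1 a b c where A0: "A0 \<in> A" and B1: "B1 \<in> shift_set C B"
    and tr: "(A0, X, B1, a, b, c) \<in> dtri C"
    using cotorsion_pair_dtri[OF cp X] .
  note d = dtri_closed[OF tr]
  have "cmp C b (idm C X) = mzero C X B1"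
    using vanish B1 d unfolding hom_vanish_def by simp
  then obtain s where "s \<in> Hom C X A0" "idm C X = cmp C a s"
    using dtri_factor_first[OF tr X id_closed[OF X]] by blast
  then have "retract_of C X A0" unfolding retract_of_def using d by metis
  then show ?thesis by (rule good_subcat_retract_closed[OF cotorsion_pairD(1)[OF cp] A0 X])
qed

lemma cotorsion_pair_right_memI:
  assumes cp: "cotorsion_pair C A B" and X: "X \<in> Ob C" and vanish: "hom_vanish C A {shO C X}"
  shows "X \<in> B"
proof -
  obtain A0 B1 a b c where A0: "A0 \<in> A" and B1: "B1 \<in> shift_set C B"
    and tr: "(A0, shO C X, B1, a, b, c) \<in> dtri C"
    using cotorsion_pair_dtri[OF cp shO_closed[OF X]] .
  note d = dtri_closed[OF tr]
  have "cmp C (idm C (shO C X)) a = mzero C A0 (shO C X)"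
    using vanish A0 d unfolding hom_vanish_def by simp
  then obtain r where "r \<in> Hom C B1 (shO C X)" "idm C (shO C X) = cmp C r b"
    using dtri_factor_second[OF tr d(2) id_closed[OF d(2)]] by blast
  then have "retract_of C (shO C X) B1" unfolding retract_of_def using d by metis
  moreover obtain B' where B': "B' \<in> B" "iso_obj C B1 (shO C B')"
    using B1 unfolding shift_set_def by blast
  moreover have B'_Ob: "B' \<in> Ob C" using cotorsion_pair_Ob(2)[OF cp] B'(1) by blast
  ultimately have "retract_of C X B'"
    using retract_of_unshift[OF X B'_Ob] retract_of_iso_right[OF d(2,3) shO_closed[OF B'_Ob]] by blast
  then show ?thesis by (rule good_subcat_retract_closed[OF cotorsion_pairD(2)[OF cp] B'(1) X])
qed

lemma twin_cotorsion_pair_T_subset: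
  assumes "twin_cotorsion_pair C S T U V"
  shows "T \<subseteq> ext C (U \<inter> T) (shift_set C V)"
proof
  fix T0 assume T0: "T0 \<in> T"
  have ST: "cotorsion_pair C S T" and UV: "cotorsion_pair C U V"
    and SV: "hom_vanish C S (shift_set C V)"
    using assms unfolding twin_cotorsion_pair_def by blast+
  note T_Ob = cotorsion_pair_Ob(2)[OF ST]
  obtain U0 V1 f g h where U0: "U0 \<in> U" and V1: "V1 \<in> shift_set C V"
    and tr: "(U0, T0, V1, f, g, h) \<in> dtri C"
    using cotorsion_pair_dtri[OF UV] T0 T_Ob by blast
  note d = dtri_closed[OF tr]
  have "hom_vanish C S {shO C U0}"
    unfolding hom_vanish_def
  proof (intro ballI)
    fix S0 Y a assume S0: "S0 \<in> S" and "Y \<in> {shO C U0}" and "a \<in> Hom C S0 Y"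
    then have Y: "Y = shO C U0" and a: "a \<in> Hom C S0 (shO C U0)" by simp_all
    have S0_Ob: "S0 \<in> Ob C" using S0 cotorsion_pair_Ob(1)[OF ST] by blast
    have "cmp C (mneg C (shM C f)) a \<in> Hom C S0 (shO C T0)" using S0_Ob a d by blast
    moreover have "shO C T0 \<in> shift_set C T" using shO_in_shift_set[OF T_Ob T0] .
    ultimately have "cmp C (mneg C (shM C f)) a = mzero C S0 (shO C T0)"
      using cotorsion_pairD(3)[OF ST] S0 unfolding hom_vanish_def by blast
    then obtain a' where "a' \<in> Hom C S0 V1" "a = cmp C h a'"
      using dtri_factor_first[OF dtri_rotate[OF dtri_rotate[OF tr]] S0_Ob a] by blast
    moreover have "a' = mzero C S0 V1" using SV S0 V1 calculation(1) unfolding hom_vanish_def by blast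
    ultimately show "a = mzero C S0 Y" using S0_Ob d Y by simp
  qed
  then have "U0 \<in> T" using cotorsion_pair_right_memI[OF ST d(1)] by blast
  then show "T0 \<in> ext C (U \<inter> T) (shift_set C V)" unfolding ext_def using d U0 V1 tr by blast
qed

lemma cotorsion_pair_dtri_unshift:
  assumes cp: "cotorsion_pair C A B" and Y: "Y \<in> Ob C"
  obtains X B' f g h where "X \<in> unshift_set C A" "B' \<in> B" "(X, Y, B', f, g, h) \<in> dtri C"
proof -
  obtain A0 B1 a b c where A0: "A0 \<in> A" and B1: "B1 \<in> shift_set C B"
    and tr: "(A0, shO C Y, B1, a, b, c) \<in> dtri C"
    using cotorsion_pair_dtri[OF cp shO_closed[OF Y]] .
  note d = dtri_closed[OF tr]
  obtain B' where B': "B' \<in> B" "iso_obj C B1 (shO C B')" using B1 unfolding shift_set_def by blast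
  have B'_Ob: "B' \<in> Ob C" using B'(1) cotorsion_pair_Ob(2)[OF cp] by blast
  obtain X where X: "X \<in> Ob C" "iso_obj C A0 (shO C X)" using shO_ess_surj[OF d(1)] by blast
  have "shO C X \<in> A" using cotorsion_pairD(1)[OF cp] A0 X unfolding good_subcat_def by blast
  then have "X \<in> unshift_set C A" unfolding unshift_set_def using X(1) by blast
  moreover obtain f g h where "(X, Y, B', f, g, h) \<in> dtri C"
    using dtri_transport[OF tr shO_closed[OF X(1)] shO_closed[OF B'_Ob] X(2) B'(2)]
      dtri_unshift[OF X(1) Y B'_Ob] by blast
  ultimately show ?thesis using that B'(1) by blast
qed

lemma twin_cotorsion_pair_U_subset:
  assumes "twin_cotorsion_pair C S T U V"
  shows "U \<subseteq> ext C (unshift_set C S) (U \<inter> T)"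
proof
  fix U0 assume U0: "U0 \<in> U"
  have ST: "cotorsion_pair C S T" and UV: "cotorsion_pair C U V"
    and SV: "hom_vanish C S (shift_set C V)"
    using assms unfolding twin_cotorsion_pair_def by blast+
  have U0_Ob: "U0 \<in> Ob C" using U0 cotorsion_pair_Ob(1)[OF UV] by blast
  obtain X T' f g h where X: "X \<in> unshift_set C S" and T': "T' \<in> T"
    and tr: "(X, U0, T', f, g, h) \<in> dtri C"
    using cotorsion_pair_dtri_unshift[OF ST U0_Ob] .
  note d = dtri_closed[OF tr]
  have "hom_vanish C {T'} (shift_set C V)"
    unfolding hom_vanish_def
  proof (intro ballI)
    fix Y V1 t assume "Y \<in> {T'}" and V1: "V1 \<in> shift_set C V" and "t \<in> Hom C Y V1"
    then have Y: "Y = T'" and t: "t \<in> Hom C T' V1" by simp_all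
    have V1_Ob: "V1 \<in> Ob C" using V1 unfolding shift_set_def by blast
    have "cmp C t g = mzero C U0 V1"
      using cotorsion_pairD(3)[OF UV] U0 V1 comp_closed[OF d(2,3) V1_Ob d(5) t]
      unfolding hom_vanish_def by blast
    then obtain e where "e \<in> Hom C (shO C X) V1" "t = cmp C e h"
      using dtri_factor_second[OF dtri_rotate[OF tr] V1_Ob t] by blast
    moreover have "e = mzero C (shO C X) V1"
      using SV X V1 calculation(1) unfolding hom_vanish_def unshift_set_def by blast
    ultimately show "t = mzero C Y V1" using Y d V1_Ob by simp
  qed
  then have "T' \<in> U" using cotorsion_pair_left_memI[OF UV d(3)] by blast
  then show "U0 \<in> ext C (unshift_set C S) (U \<inter> T)"
    unfolding ext_def using U0_Ob X T' tr by blast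
qed

end

theorem lemma2p5:
  fixes C :: "('o, 'm) tricat"
    and S T U V :: "'o set"
  assumes "triangulated C"
    and "twin_cotorsion_pair C S T U V"
  shows "U \<subseteq> ext C (unshift_set C S) (U \<inter> T)
       \<and> T \<subseteq> ext C (U \<inter> T) (shift_set C V)"
proof -
  interpret triangulated_cat C by unfold_locales (rule assms(1))
  show ?thesis
    using twin_cotorsion_pair_U_subset twin_cotorsion_pair_T_subset assms(2) by blast
qed

end
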